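(* Let $q$ be a prime power and let $\mathcal{F}=(\mathcal{F}_1,\ldots,\mathcal{F}_r)$ be a flag on $\mathbb{F}_{q^n}$. Then $\mathrm{Stab}^+(\mathcal{F})$ is the best friend of $\mathcal{F}$ and it contains every friend $\mathbb{F}_{q^m}$ of $\mathcal{F}$. Moreover, if $1\in\mathcal{F}_1$, then $\mathbb{F}_{q^m}\subseteq\mathrm{Stab}^+(\mathcal{F})\subseteq\mathcal{F}_1$ for every friend $\mathbb{F}_{q^m}$ of $\mathcal{F}$.
   Context: A flag on $\mathbb{F}_{q^n}$ is a sequence $(\mathcal{F}_1,\ldots,\mathcal{F}_r)$ of $\mathbb{F}_q$-subspaces with $\{0\}\subsetneq\mathcal{F}_1\subsetneq\cdots\subsetneq\mathcal{F}_r\subsetneq\mathbb{F}_{q^n}$. For $\gamma\in\mathbb{F}_{q^n}^*$, $\mathcal{F}\gamma=(\mathcal{F}_1\gamma,\ldots,\mathcal{F}_r\gamma)$ with $\mathcal{U}\gamma=\{u\gamma:u\in\mathcal{U}\}$; $\mathrm{Stab}(\mathcal{F})=\{\gamma\in\mathbb{F}_{q^n}^*:\mathcal{F}\gamma=\mathcal{F}\}$, and $\mathrm{Stab}^+(\mathcal{F})$ is the smallest subfield of $\mathbb{F}_{q^n}$ containing $\mathbb{F}_q$ and $\mathrm{Stab}(\mathcal{F})$. A subfield $\mathbb{F}_{q^m}$ of $\mathbb{F}_{q^n}$ is a friend of $\mathcal{F}$ if every $\mathcal{F}_i$ is a vector space over $\mathbb{F}_{q^m}$; the best friend of $\mathcal{F}$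 is its largest friend. *)

theory Defs
  imports Main "HOL-Computational_Algebra.Primes"
begin

text \<open>The ambient field F_{q^n} is the finite field UNIV of type 'a; the base
field F_q is a subfield K of it.\<close>

definition is_subfield :: "'a::field set \<Rightarrow> bool" where
  "is_subfield S \<longleftrightarrow> 0 \<in> S \<and> 1 \<in> S \<and>
     (\<forall>x\<in>S. \<forall>y\<in>S. x + y \<in> S \<and> x * y \<in> S) \<and>
     (\<forall>x\<in>S. - x \<in> S) \<and> (\<forall>x\<in>S. x \<noteq> 0 \<longrightarrow> inverse x \<in> S)"

definition is_subspace_over :: "'a::field set \<Rightarrow> 'a set \<Rightarrow> bool" where
  "is_subspace_over L U \<longleftrightarrow> 0 \<in> U \<and> (\<forall>x\<in>U. \<forall>y\<in>U. x + y \<in> U) \<and>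
     (\<forall>c\<in>L. \<forall>x\<in>U. c * x \<in> U)"

definition is_flag :: "'a::field set \<Rightarrow> 'a set list \<Rightarrow> bool" where
  "is_flag K Fs \<longleftrightarrow> Fs \<noteq> [] \<and>
     (\<forall>i<length Fs. is_subspace_over K (Fs ! i)) \<and>
     {0} \<subset> Fs ! 0 \<and>
     (\<forall>i. Suc i < length Fs \<longrightarrow> Fs ! i \<subset> Fs ! Suc i) \<and>
     Fs ! (length Fs - 1) \<subset> UNIV"

definition set_scale :: "'a::field set \<Rightarrow> 'a \<Rightarrow> 'a set" where
  "set_scale U \<gamma> = (\<lambda>u. u * \<gamma>) ` U"

definition Stab :: "'a::field set list \<Rightarrow> 'a set" where
  "Stab Fs = {\<gamma>. \<gamma> \<noteq> 0 \<and> map (\<lambda>U. set_scale U \<gamma>) Fs = Fs}"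

definition Stab_plus :: "'a::field set \<Rightarrow> 'a set list \<Rightarrow> 'a set" where
  "Stab_plus K Fs = \<Inter>{L. is_subfield L \<and> K \<subseteq> L \<and> Stab Fs \<subseteq> L}"

definition friend :: "'a::field set \<Rightarrow> 'a set list \<Rightarrow> 'a set \<Rightarrow> bool" where
  "friend K Fs L \<longleftrightarrow> is_subfield L \<and> K \<subseteq> L \<and>
     (\<forall>i<length Fs. is_subspace_over L (Fs ! i))"

definition best_friend :: "'a::{field,finite} set \<Rightarrow> 'a set list \<Rightarrow> 'a set \<Rightarrow> bool" where
  "best_friend K Fs L \<longleftrightarrow> friend K Fs L \<and> (\<forall>L'. friend K Fs L' \<longrightarrow> card L' \<le> card L)"

end

theory Submission
  imports Defs
begin

(* Let M be the set of all \<gamma> with \<gamma> F_i \<subseteq> F_i for every i. M contains F_q and is closed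
   under the ring operations. Multiplication by a nonzero \<gamma> is injective, so on finite sets
   \<gamma> F_i \<subseteq> F_i already forces \<gamma> F_i = F_i. Hence M is a subfield (x M = M yields inverses),
   its nonzero elements are exactly Stab(F), and Stab+(F) = M. A subfield containing F_q is a
   friend iff it lies in M, so M is the largest friend; and if 1 \<in> F_1 then M = M 1 \<subseteq> F_1. *)

definition multipliers :: "'a::field set list \<Rightarrow> 'a set" where
  "multipliers Fs = {\<gamma>. \<forall>i<length Fs. \<forall>u\<in>Fs ! i. \<gamma> * u \<in> Fs ! i}"

lemma set_scale_eq_iff_mult_closed:
  fixes U :: "'a::field set"
  assumes "finite U" and "\<gamma> \<noteq> 0"
  shows "set_scale U \<gamma> = U \<longleftrightarrow> (\<forall>u\<in>U. \<gamma> * u \<in> U)"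
proof
  assume "set_scale U \<gamma> = U"
  then show "\<forall>u\<in>U. \<gamma> * u \<in> U"
    unfolding set_scale_def by (metis imageI mult.commute)
next
  assume closed: "\<forall>u\<in>U. \<gamma> * u \<in> U"
  have "inj_on (\<lambda>u. u * \<gamma>) U" using assms(2) by (auto simp: inj_on_def)
  moreover have "(\<lambda>u. u * \<gamma>) ` U \<subseteq> U" using closed by (auto simp: mult.commute)
  ultimately show "set_scale U \<gamma> = U"
    unfolding set_scale_def using assms(1) by (simp add: endo_inj_surj)
qed

lemma Stab_eq_multipliers_minus_zero:
  fixes Fs :: "'a::{field,finite} set list"
  shows "Stab Fs = multipliers Fs - {0}"
proof -
  have "map (\<lambda>U. set_scale U \<gamma>) Fs = Fs \<longleftrightarrow> \<gamma> \<in> multipliers Fs" if "\<gamma> \<noteq> 0" for \<gamma>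
    using set_scale_eq_iff_mult_closed[OF finite that]
    unfolding multipliers_def by (simp add: list_eq_iff_nth_eq)
  then show ?thesis unfolding Stab_def by blast
qed

lemma subset_multipliers_iff:
  "L \<subseteq> multipliers Fs \<longleftrightarrow> (\<forall>i<length Fs. \<forall>c\<in>L. \<forall>u\<in>Fs ! i. c * u \<in> Fs ! i)"
  unfolding multipliers_def by blast

lemma subset_multipliers_if_subspaces:
  assumes "\<forall>i<length Fs. is_subspace_over K (Fs ! i)"
  shows "K \<subseteq> multipliers Fs"
  using assms unfolding multipliers_def is_subspace_over_def by blast

lemma is_subfield_multipliers:
  fixes K :: "'a::{field,finite} set"
  assumes K: "is_subfield K" and subspaces: "\<forall>i<length Fs. is_subspace_over K (Fs ! i)"
  shows "is_subfield (multipliers Fs)"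
proof -
  let ?M = "multipliers Fs"
  have zero: "0 \<in> ?M" and one: "1 \<in> ?M"
    using subspaces unfolding multipliers_def is_subspace_over_def by auto
  have add: "x + y \<in> ?M" if "x \<in> ?M" "y \<in> ?M" for x y
    using that subspaces unfolding multipliers_def is_subspace_over_def
    by (simp add: distrib_right)
  have mult: "x * y \<in> ?M" if "x \<in> ?M" "y \<in> ?M" for x y
    using that unfolding multipliers_def by (simp add: mult.assoc)
  have "- 1 \<in> K" using K unfolding is_subfield_def by blast
  then have "- 1 \<in> ?M" using subset_multipliers_if_subspaces[OF subspaces] by blast
  then have uminus: "- x \<in> ?M" if "x \<in> ?M" for x
    using mult[of "- 1" x] that by simp
  have inverse: "inverse x \<in> ?M" if "x \<in> ?M" "x \<noteq> 0" for x
  proof -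
    have "set_scale ?M x = ?M"
      using mult \<open>x \<in> ?M\<close> by (simp add: set_scale_eq_iff_mult_closed[OF finite \<open>x \<noteq> 0\<close>])
    with one obtain u where "u \<in> ?M" "u * x = 1"
      unfolding set_scale_def by (metis imageE)
    moreover from \<open>u * x = 1\<close> have "inverse x = u"
      by (intro inverse_unique) (simp add: mult.commute)
    ultimately show ?thesis by simp
  qed
  show ?thesis unfolding is_subfield_def by (simp add: zero one add mult uminus inverse)
qed

lemma friend_iff_subset_multipliers:
  assumes "\<forall>i<length Fs. is_subspace_over K (Fs ! i)"
  shows "friend K Fs L \<longleftrightarrow> is_subfield L \<and> K \<subseteq> L \<and> L \<subseteq> multipliers Fs"
  using assms unfolding friend_def is_subspace_over_def subset_multipliers_iff by blast

lemma Stab_plus_eq_multipliers: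
  fixes K :: "'a::{field,finite} set"
  assumes K: "is_subfield K" and subspaces: "\<forall>i<length Fs. is_subspace_over K (Fs ! i)"
  shows "Stab_plus K Fs = multipliers Fs"
proof
  show "Stab_plus K Fs \<subseteq> multipliers Fs"
    unfolding Stab_plus_def Stab_eq_multipliers_minus_zero
    using is_subfield_multipliers[OF K subspaces] subset_multipliers_if_subspaces[OF subspaces]
    by (intro Inter_lower) auto
  show "multipliers Fs \<subseteq> Stab_plus K Fs"
    unfolding Stab_plus_def
  proof (rule Inter_greatest)
    fix L assume "L \<in> {L. is_subfield L \<and> K \<subseteq> L \<and> Stab Fs \<subseteq> L}"
    then have "0 \<in> L" and "multipliers Fs - {0} \<subseteq> L"
      unfolding is_subfield_def Stab_eq_multipliers_minus_zero by auto
    then show "multipliers Fs \<subseteq> L" by blast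
  qed
qed

lemma multipliers_subset_first:
  assumes "Fs \<noteq> []" and "1 \<in> Fs ! 0"
  shows "multipliers Fs \<subseteq> Fs ! 0"
proof
  fix \<gamma> assume "\<gamma> \<in> multipliers Fs"
  then have "\<gamma> * 1 \<in> Fs ! 0" using assms unfolding multipliers_def by blast
  then show "\<gamma> \<in> Fs ! 0" by simp
qed

lemma best_friend_if_greatest:
  fixes L :: "'a::{field,finite} set"
  assumes "friend K Fs L" and "\<forall>L'. friend K Fs L' \<longrightarrow> L' \<subseteq> L"
  shows "best_friend K Fs L"
  using assms unfolding best_friend_def by (simp add: card_mono)

theorem proposition3p16:
  fixes K :: "'a::{field,finite} set" and Fs :: "'a set list" and q n :: nat
  assumes "\<exists>p k. prime p \<and> k \<ge> 1 \<and> q = p ^ k" and "n \<ge> 1"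
    and "is_subfield K" and "card K = q" and "card (UNIV :: 'a set) = q ^ n"
    and "is_flag K Fs"
  shows "best_friend K Fs (Stab_plus K Fs)
     \<and> (\<forall>L. friend K Fs L \<longrightarrow> L \<subseteq> Stab_plus K Fs)
     \<and> (1 \<in> Fs ! 0 \<longrightarrow> (\<forall>L. friend K Fs L \<longrightarrow> L \<subseteq> Stab_plus K Fs \<and> Stab_plus K Fs \<subseteq> Fs ! 0))"
proof -
  have subspaces: "\<forall>i<length Fs. is_subspace_over K (Fs ! i)" and "Fs \<noteq> []"
    using \<open>is_flag K Fs\<close> unfolding is_flag_def by auto
  have Stab_plus: "Stab_plus K Fs = multipliers Fs"
    using Stab_plus_eq_multipliers[OF \<open>is_subfield K\<close> subspaces] .
  have greatest: "\<forall>L. friend K Fs L \<longrightarrow> L \<subseteq> Stab_plus K Fs"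
    unfolding Stab_plus friend_iff_subset_multipliers[OF subspaces] by blast
  have "friend K Fs (Stab_plus K Fs)"
    unfolding Stab_plus friend_iff_subset_multipliers[OF subspaces]
    using is_subfield_multipliers[OF \<open>is_subfield K\<close> subspaces]
      subset_multipliers_if_subspaces[OF subspaces] by blast
  then have "best_friend K Fs (Stab_plus K Fs)"
    using greatest by (rule best_friend_if_greatest)
  moreover have "1 \<in> Fs ! 0 \<longrightarrow> Stab_plus K Fs \<subseteq> Fs ! 0"
    unfolding Stab_plus using multipliers_subset_first[OF \<open>Fs \<noteq> []\<close>] by blast
  ultimately show ?thesis using greatest by blast
qed

end
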